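(* Fix an integer $k\ge0$ and for $m\ge0$ let $S_m=(-1)^k\sum_{i=0}^{m}\binom{2k}{m-i}\binom{4k+i}{i}$. Then $S_0=(-1)^k$, $S_1=(-1)^k(6k+1)$, and for all $m\ge0$, \[ (m+2)S_{m+2}=(6k+1)S_{m+1}+(m+1+2k)S_m . \] Moreover, the sequence $T_m=\sum_{i=0}^{2k}(-1)^i\binom{m+k+i}{m+k-i}\binom{m+3k-i}{m-k+i}$ satisfies the same recurrence $(m+2)T_{m+2}=(6k+1)T_{m+1}+(m+1+2k)T_m$ for all $m\ge 0$, with $T_0=(-1)^k$ and $T_1=(-1)^k(6k+1)$.
   Context: Binomial coefficients $\binom{a}{b}$ with integer $a\ge0$ are taken to be $0$ when $b<0$ or $b>a$. *)

theory Defs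
  imports Main
begin

definition ibinom :: "int \<Rightarrow> int \<Rightarrow> int" where
  "ibinom a b = (if 0 \<le> b \<and> b \<le> a then int (nat a choose nat b) else 0)"

definition seqS :: "nat \<Rightarrow> nat \<Rightarrow> int" where
  "seqS k m = (-1) ^ k * (\<Sum>i=0..m. ibinom (2 * int k) (int m - int i) * ibinom (4 * int k + int i) (int i))"

definition seqT :: "nat \<Rightarrow> nat \<Rightarrow> int" where
  "seqT k m = (\<Sum>i=0..2*k. (-1) ^ i * ibinom (int m + int k + int i) (int m + int k - int i)
                              * ibinom (int m + 3 * int k - int i) (int m - int k + int i))"

end

theory Submission
  imports Defs "HOL-Computational_Algebra.Formal_Power_Series"
begin

text \<open>
  Up to the sign (-1)^k, S_m is the m-th coefficient of F = (1 + X)^(2k) / (1 - X)^(4k + 1).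
  Logarithmic differentiation gives (1 - X^2) F' = (6k + 1 + (2k + 1) X) F, and comparing
  coefficients yields the recurrence.

  For T_m we use creative telescoping: the recurrence operator maps the i-th summand to
  R(i + 1) - R(i) for an explicit certificate R that vanishes at both ends of the summation
  range. After clearing a common binomial factor, this termwise identity is a polynomial
  identity. For the initial values, only the summands with |i - k| <= m are nonzero.
\<close>

lemma ibinom_of_nat: "ibinom (int a) (int b) = int (a choose b)"
  by (simp add: ibinom_def)

lemma ibinom_of_nat_complement: "ibinom (int a) (int a - int b) = int (a choose b)"
proof (cases "b \<le> a")
  case True
  then have "nat (int a - int b) = a - b" by simp
  with True show ?thesis by (simp add: ibinom_def binomial_symmetric[symmetric])
qed (simp add: ibinom_def)

lemma gbinomial_Suc_absorb_comp:
  fixes a :: "'a::field_char_0"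
  shows "of_nat (Suc k) * (a gchoose Suc k) = (a - of_nat k) * (a gchoose k)"
  using gbinomial_mult_1[of a k] by (simp add: algebra_simps)

lemma Suc_times_binomial_int: "int (Suc j) * int (n choose Suc j) = (int n - int j) * int (n choose j)"
proof -
  have "real (Suc j) * real (n choose Suc j) = (real n - real j) * real (n choose j)"
    using gbinomial_Suc_absorb_comp[of j "real n"] by (simp add: binomial_gbinomial)
  then show ?thesis
    by (simp only: of_int_eq_iff[where 'a=real, symmetric]) simp
qed

lemma gbinomial_shifts_by_two:
  fixes a :: "'a::field_char_0" and k :: nat
  defines "c \<equiv> of_nat ((k + 1) * (k + 2))"
  shows "c * (a gchoose (k + 2)) = (a - of_nat k) * (a - of_nat k - 1) * (a gchoose k)"
    and "c * ((a + 1) gchoose (k + 2)) = (a + 1) * (a - of_nat k) * (a gchoose k)"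
    and "c * ((a + 2) gchoose (k + 2)) = (a + 2) * (a + 1) * (a gchoose k)"
proof -
  have step0: "of_nat (k + 1) * (a gchoose (k + 1)) = (a - of_nat k) * (a gchoose k)"
    using gbinomial_Suc_absorb_comp[of k a] by simp
  have step1: "of_nat (k + 2) * (a gchoose (k + 2)) = (a - of_nat k - 1) * (a gchoose (k + 1))"
    using gbinomial_Suc_absorb_comp[of "k + 1" a] by (simp add: algebra_simps)
  have absorb1: "of_nat (k + 2) * ((a + 1) gchoose (k + 2)) = (a + 1) * (a gchoose (k + 1))"
    using gbinomial_absorption[of "k + 1" "a + 1"] by (simp add: algebra_simps)
  have absorb2: "of_nat (k + 2) * ((a + 2) gchoose (k + 2)) = (a + 2) * ((a + 1) gchoose (k + 1))"
    using gbinomial_absorption[of "k + 1" "a + 2"] by (simp add: algebra_simps)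
  have absorb3: "of_nat (k + 1) * ((a + 1) gchoose (k + 1)) = (a + 1) * (a gchoose k)"
    using gbinomial_absorption[of k "a + 1"] by (simp add: algebra_simps)
  have c: "c = of_nat (k + 1) * of_nat (k + 2)"
    unfolding c_def by (simp add: algebra_simps)
  have "c * (a gchoose (k + 2)) = of_nat (k + 1) * (of_nat (k + 2) * (a gchoose (k + 2)))"
    by (simp add: c)
  also have "\<dots> = (a - of_nat k - 1) * (of_nat (k + 1) * (a gchoose (k + 1)))"
    unfolding step1 by (simp only: ac_simps)
  finally show "c * (a gchoose (k + 2)) = (a - of_nat k) * (a - of_nat k - 1) * (a gchoose k)"
    unfolding step0 by (simp only: ac_simps)
  have "c * ((a + 1) gchoose (k + 2)) = of_nat (k + 1) * (of_nat (k + 2) * ((a + 1) gchoose (k + 2)))"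
    by (simp add: c)
  also have "\<dots> = (a + 1) * (of_nat (k + 1) * (a gchoose (k + 1)))"
    unfolding absorb1 by (simp only: ac_simps)
  finally show "c * ((a + 1) gchoose (k + 2)) = (a + 1) * (a - of_nat k) * (a gchoose k)"
    unfolding step0 by (simp only: ac_simps)
  have "c * ((a + 2) gchoose (k + 2)) = of_nat (k + 1) * (of_nat (k + 2) * ((a + 2) gchoose (k + 2)))"
    by (simp add: c)
  also have "\<dots> = (a + 2) * (of_nat (k + 1) * ((a + 1) gchoose (k + 1)))"
    unfolding absorb2 by (simp only: ac_simps)
  finally show "c * ((a + 2) gchoose (k + 2)) = (a + 2) * (a + 1) * (a gchoose k)"
    unfolding absorb3 by (simp only: ac_simps)
qed

unbundle fps_syntax

text \<open>The power series (1 + X)^n and (1 - X)^-(n + 1).\<close>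

definition binomial_fps :: "nat \<Rightarrow> int fps" where
  "binomial_fps n = Abs_fps (\<lambda>j. int (n choose j))"

definition neg_binomial_fps :: "nat \<Rightarrow> int fps" where
  "neg_binomial_fps n = Abs_fps (\<lambda>j. int ((n + j) choose j))"

lemma binomial_fps_deriv: "(1 + fps_X) * fps_deriv (binomial_fps n) = fps_const (int n) * binomial_fps n"
proof (rule fps_ext)
  fix j
  show "((1 + fps_X) * fps_deriv (binomial_fps n)) $ j = (fps_const (int n) * binomial_fps n) $ j"
    using Suc_times_binomial_int[of j n] Suc_times_binomial_int[of "j - 1" n]
    by (cases j) (simp_all add: binomial_fps_def distrib_right algebra_simps)
qed

lemma neg_binomial_fps_deriv:
  "(1 - fps_X) * fps_deriv (neg_binomial_fps n) = fps_const (int n + 1) * neg_binomial_fps n"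
proof (rule fps_ext)
  fix j
  have "int (Suc i) * int (Suc (n + i) choose Suc i) = int (Suc (n + i)) * int ((n + i) choose i)" for i
    by (simp only: of_nat_mult[symmetric] Suc_times_binomial)
  from this[of j] this[of "j - 1"]
  show "((1 - fps_X) * fps_deriv (neg_binomial_fps n)) $ j = (fps_const (int n + 1) * neg_binomial_fps n) $ j"
    by (cases j) (simp_all del: binomial_Suc_Suc add: neg_binomial_fps_def left_diff_distrib algebra_simps)
qed

lemma binomial_product_fps_ode:
  fixes a b :: nat
  defines "F \<equiv> neg_binomial_fps b * binomial_fps a"
  shows "(1 - fps_X\<^sup>2) * fps_deriv F
    = (fps_const (int a + int b + 1) + fps_const (int b + 1 - int a) * fps_X) * F"
proof -
  have "(1 - fps_X\<^sup>2) * fps_deriv F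
      = (1 + fps_X) * binomial_fps a * ((1 - fps_X) * fps_deriv (neg_binomial_fps b))
      + (1 - fps_X) * neg_binomial_fps b * ((1 + fps_X) * fps_deriv (binomial_fps a))"
    by (simp add: F_def algebra_simps power2_eq_square)
  also have "\<dots> = (fps_const (int b + 1) * (1 + fps_X) + fps_const (int a) * (1 - fps_X)) * F"
    unfolding binomial_fps_deriv neg_binomial_fps_deriv by (simp add: F_def algebra_simps)
  also have "fps_const (int b + 1) * (1 + fps_X) + fps_const (int a) * (1 - fps_X)
      = fps_const (int a + int b + 1) + fps_const (int b + 1 - int a) * fps_X"
    by (rule fps_ext) (simp add: algebra_simps)
  finally show ?thesis .
qed

lemma fps_ode_coeff_recurrence:
  fixes F :: "'a::comm_ring_1 fps"
  assumes "(1 - fps_X\<^sup>2) * fps_deriv F = (fps_const c + fps_const d * fps_X) * F"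
  shows "of_nat (m + 2) * F $ (m + 2) = c * F $ (m + 1) + (d + of_nat m) * F $ m"
proof -
  have "((1 - fps_X\<^sup>2) * fps_deriv F) $ (m + 1) = of_nat (m + 2) * F $ (m + 2) - of_nat m * F $ m"
    by (cases m; simp add: left_diff_distrib fps_X_power_mult_nth; simp add: algebra_simps)
  moreover have "((fps_const c + fps_const d * fps_X) * F) $ (m + 1) = c * F $ (m + 1) + d * F $ m"
    by (simp add: distrib_right mult.assoc)
  ultimately show ?thesis
    using arg_cong[OF assms, of "\<lambda>G. G $ (m + 1)"] by (simp add: algebra_simps)
qed

lemma seqS_eq_coeff: "seqS k m = (-1) ^ k * (neg_binomial_fps (4 * k) * binomial_fps (2 * k)) $ m"
  unfolding seqS_def fps_mult_nth
  by (intro arg_cong[where f="\<lambda>s. (-1) ^ k * s"] sum.cong)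
    (auto simp: neg_binomial_fps_def binomial_fps_def ibinom_of_nat[symmetric] of_nat_diff)

lemma seqS_recurrence:
  "int (m + 2) * seqS k (m + 2) = (6 * int k + 1) * seqS k (m + 1) + (int m + 1 + 2 * int k) * seqS k m"
  using fps_ode_coeff_recurrence[OF binomial_product_fps_ode[where a="2 * k" and b="4 * k"], of m]
  unfolding seqS_eq_coeff by (simp add: algebra_simps)

lemma seqS_0: "seqS k 0 = (-1) ^ k"
  by (simp add: seqS_def ibinom_def)

lemma seqS_1: "seqS k 1 = (-1) ^ k * (6 * int k + 1)"
proof -
  have "ibinom (2 * int k) 1 = 2 * int k" "ibinom (2 * int k) 0 = 1" "ibinom (4 * int k) 0 = 1"
    "ibinom (4 * int k + 1) 1 = 4 * int k + 1"
    by (auto simp: ibinom_def nat_mult_distrib)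
  then show ?thesis
    by (simp add: seqS_def algebra_simps)
qed

lemma seqT_summand_identity:
  fixes m k i :: "'a::field_char_0" and r s :: nat
  assumes r: "of_nat r = 2 * i - 2" and s: "of_nat s = 4 * k - 2 * i - 2"
  defines "a \<equiv> m + k + i" and "b \<equiv> m + 3 * k - i"
  shows "(m + 2) * ((a + 2) gchoose (r + 2)) * ((b + 2) gchoose (s + 2))
       - (6 * k + 1) * ((a + 1) gchoose (r + 2)) * ((b + 1) gchoose (s + 2))
       - (m + 2 * k + 1) * (a gchoose (r + 2)) * (b gchoose (s + 2))
     = k * ((a + 1) gchoose (r + 2)) * (b gchoose s) + k * (a gchoose r) * ((b + 1) gchoose (s + 2))"
    (is "?lhs = ?rhs")
proof -
  define cr cs where "cr = (of_nat ((r + 1) * (r + 2)) :: 'a)" and "cs = (of_nat ((s + 1) * (s + 2)) :: 'a)"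
  define G H where "G = a gchoose r" and "H = b gchoose s"
  note A = gbinomial_shifts_by_two[where a=a and k=r, folded cr_def G_def]
  note B = gbinomial_shifts_by_two[where a=b and k=s, folded cs_def H_def]
  have "cr * cs * ?lhs
      = (m + 2) * (cr * ((a + 2) gchoose (r + 2))) * (cs * ((b + 2) gchoose (s + 2)))
      - (6 * k + 1) * (cr * ((a + 1) gchoose (r + 2))) * (cs * ((b + 1) gchoose (s + 2)))
      - (m + 2 * k + 1) * (cr * (a gchoose (r + 2))) * (cs * (b gchoose (s + 2)))"
    by (simp add: algebra_simps)
  txt \<open>After the shifts, every product is a polynomial in m, k, i times G * H.\<close>
  also have "\<dots> = k * (cr * ((a + 1) gchoose (r + 2))) * (cs * H) + k * (cr * G) * (cs * ((b + 1) gchoose (s + 2)))"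
    unfolding A B unfolding cr_def cs_def of_nat_mult of_nat_add r s a_def b_def by (simp add: algebra_simps)
  also have "\<dots> = cr * cs * ?rhs"
    unfolding G_def H_def by (simp add: algebra_simps)
  finally have "cr * cs * ?lhs = cr * cs * ?rhs" .
  moreover have "cr * cs \<noteq> 0"
    unfolding cr_def cs_def by (simp only: mult_eq_0_iff of_nat_eq_0_iff) simp
  ultimately show ?thesis by simp
qed

lemma seqT_boundary_identity:
  fixes m k :: "'a::field_char_0" and s :: nat
  assumes s: "of_nat s = 4 * k - 2"
  defines "b \<equiv> m + 3 * k"
  shows "(m + 2) * ((b + 2) gchoose (s + 2)) - (6 * k + 1) * ((b + 1) gchoose (s + 2))
       - (m + 2 * k + 1) * (b gchoose (s + 2)) = k * (b gchoose s)"
    (is "?lhs = ?rhs")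
proof -
  define cs where "cs = (of_nat ((s + 1) * (s + 2)) :: 'a)"
  define H where "H = b gchoose s"
  note B = gbinomial_shifts_by_two[where a=b and k=s, folded cs_def H_def]
  have "cs * ?lhs = (m + 2) * (cs * ((b + 2) gchoose (s + 2))) - (6 * k + 1) * (cs * ((b + 1) gchoose (s + 2)))
       - (m + 2 * k + 1) * (cs * (b gchoose (s + 2)))"
    by (simp add: algebra_simps)
  also have "\<dots> = k * (cs * H)"
    unfolding B unfolding cs_def of_nat_mult of_nat_add s b_def
    by (simp add: algebra_simps)
  also have "\<dots> = cs * ?rhs"
    unfolding H_def by (simp add: algebra_simps)
  finally have "cs * ?lhs = cs * ?rhs" .
  moreover have "cs \<noteq> 0"
    unfolding cs_def by (simp only: of_nat_eq_0_iff) simp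
  ultimately show ?thesis by simp
qed

definition recurrence_defect :: "nat \<Rightarrow> (nat \<Rightarrow> int) \<Rightarrow> nat \<Rightarrow> int" where
  "recurrence_defect k f m
     = int (m + 2) * f (m + 2) - (6 * int k + 1) * f (m + 1) - (int m + 1 + 2 * int k) * f m"

lemma recurrence_defect_sum:
  "recurrence_defect k (\<lambda>m. \<Sum>i\<in>A. f m i) m = (\<Sum>i\<in>A. recurrence_defect k (\<lambda>m. f m i) m)"
  by (simp add: recurrence_defect_def sum_distrib_left sum_subtractf)

definition seqT_summand :: "nat \<Rightarrow> nat \<Rightarrow> nat \<Rightarrow> int" where
  "seqT_summand k m i
     = (-1) ^ i * int ((m + k + i) choose (2 * i)) * int ((m + 3 * k - i) choose (4 * k - 2 * i))"

text \<open>Zeilberger's certificate for the summands of seqT.\<close>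

definition seqT_certificate :: "nat \<Rightarrow> nat \<Rightarrow> nat \<Rightarrow> int" where
  "seqT_certificate k m i =
     (if 1 \<le> i \<and> i \<le> 2 * k
      then (-1) ^ (i - 1) * int k * int ((m + k + i) choose (2 * i - 2))
             * int ((m + 3 * k + 1 - i) choose (4 * k - 2 * i))
      else 0)"

lemma seqT_eq_sum_summand: "seqT k m = (\<Sum>i = 0..2 * k. seqT_summand k m i)"
  unfolding seqT_def
proof (rule sum.cong[OF refl])
  fix i assume "i \<in> {0..2 * k}"
  then have "int (m + 3 * k - i) = int m + 3 * int k - int i"
    and "int (4 * k - 2 * i) = 4 * int k - 2 * int i" by auto
  then have "ibinom (int m + 3 * int k - int i) (int m - int k + int i)
      = int ((m + 3 * k - i) choose (4 * k - 2 * i))"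
    using ibinom_of_nat_complement[of "m + 3 * k - i" "4 * k - 2 * i"] by (simp add: algebra_simps)
  moreover have "ibinom (int m + int k + int i) (int m + int k - int i) = int ((m + k + i) choose (2 * i))"
    using ibinom_of_nat_complement[of "m + k + i" "2 * i"] by (simp add: algebra_simps)
  ultimately show "(-1) ^ i * ibinom (int m + int k + int i) (int m + int k - int i)
      * ibinom (int m + 3 * int k - int i) (int m - int k + int i) = seqT_summand k m i"
    by (simp add: seqT_summand_def)
qed

lemma recurrence_defect_seqT_summand_interior:
  assumes "1 \<le> i" and "i < 2 * k"
  shows "recurrence_defect k (\<lambda>m. seqT_summand k m i) m
    = seqT_certificate k m (Suc i) - seqT_certificate k m i"
proof -
  define x y r s where "x = m + k + i" and "y = m + 3 * k - i"
    and "r = 2 * i - 2" and "s = 4 * k - 2 * i - 2"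
  have idx: "2 * i = r + 2" "4 * k - 2 * i = s + 2" "m + 2 + k + i = x + 2" "m + 1 + k + i = x + 1"
    "m + k + i = x" "m + 2 + 3 * k - i = y + 2" "m + 1 + 3 * k - i = y + 1" "m + 3 * k - i = y"
    "m + k + Suc i = x + 1" "2 * Suc i - 2 = r + 2" "m + 3 * k + 1 - Suc i = y"
    "4 * k - 2 * Suc i = s" "2 * i - 2 = r" "m + 3 * k + 1 - i = y + 1"
    using assms by (auto simp: x_def y_def r_def s_def)
  have sign: "(-1::int) ^ (i - 1) = - ((-1) ^ i)"
    using assms(1) by (cases i) auto
  have real_idx: "real r = 2 * real i - 2" "real s = 4 * real k - 2 * real i - 2"
    "real x = real m + real k + real i" "real y = real m + 3 * real k - real i"
    using assms by (auto simp: x_def y_def r_def s_def of_nat_diff)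
  have "(real m + 2) * real ((x + 2) choose (r + 2)) * real ((y + 2) choose (s + 2))
      - (6 * real k + 1) * real ((x + 1) choose (r + 2)) * real ((y + 1) choose (s + 2))
      - (real m + 2 * real k + 1) * real (x choose (r + 2)) * real (y choose (s + 2))
    = real k * real ((x + 1) choose (r + 2)) * real (y choose s)
      + real k * real (x choose r) * real ((y + 1) choose (s + 2))"
    using seqT_summand_identity[OF real_idx(1,2), of "real m"]
    unfolding binomial_gbinomial of_nat_add real_idx(3,4) by (simp add: algebra_simps)
  then have core: "int (m + 2) * int ((x + 2) choose (r + 2)) * int ((y + 2) choose (s + 2))
      - (6 * int k + 1) * int ((x + 1) choose (r + 2)) * int ((y + 1) choose (s + 2))
      - (int m + 1 + 2 * int k) * int (x choose (r + 2)) * int (y choose (s + 2))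
    = int k * int ((x + 1) choose (r + 2)) * int (y choose s)
      + int k * int (x choose r) * int ((y + 1) choose (s + 2))"
    by (simp only: of_int_eq_iff[where 'a=real, symmetric]) (simp add: algebra_simps)
  show ?thesis
    using arg_cong[OF core, of "\<lambda>z. (-1) ^ i * z"] assms
    unfolding recurrence_defect_def seqT_summand_def seqT_certificate_def idx(2-) sign
    unfolding idx(1) by (simp add: algebra_simps)
qed

lemma recurrence_defect_boundary_summand:
  assumes "1 \<le> k"
  shows "recurrence_defect k (\<lambda>m. int ((m + 3 * k) choose (4 * k))) m
    = int k * int ((m + 3 * k) choose (4 * k - 2))"
proof -
  define y s where "y = m + 3 * k" and "s = 4 * k - 2"
  have idx: "4 * k = s + 2" "m + 2 + 3 * k = y + 2" "m + 1 + 3 * k = y + 1" "m + 3 * k = y" "4 * k - 2 = s"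
    using assms by (auto simp: y_def s_def)
  have real_idx: "real s = 4 * real k - 2" "real y = real m + 3 * real k"
    using assms by (auto simp: y_def s_def of_nat_diff)
  have "(real m + 2) * real ((y + 2) choose (s + 2)) - (6 * real k + 1) * real ((y + 1) choose (s + 2))
      - (real m + 2 * real k + 1) * real (y choose (s + 2)) = real k * real (y choose s)"
    using seqT_boundary_identity[OF real_idx(1), of "real m"]
    unfolding binomial_gbinomial of_nat_add real_idx(2) by (simp add: algebra_simps)
  then have "int (m + 2) * int ((y + 2) choose (s + 2)) - (6 * int k + 1) * int ((y + 1) choose (s + 2))
      - (int m + 1 + 2 * int k) * int (y choose (s + 2)) = int k * int (y choose s)"
    by (simp only: of_int_eq_iff[where 'a=real, symmetric]) (simp add: algebra_simps)
  then show ?thesis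
    unfolding recurrence_defect_def idx(5) unfolding idx(1-4) by simp
qed

lemma seqT_summand_boundary:
  assumes "i = 0 \<or> i = 2 * k"
  shows "seqT_summand k m i = int ((m + 3 * k) choose (4 * k))"
  using assms by (auto simp: seqT_summand_def algebra_simps)

lemma recurrence_defect_seqT_summand:
  assumes "i \<le> 2 * k"
  shows "recurrence_defect k (\<lambda>m. seqT_summand k m i) m
    = seqT_certificate k m (Suc i) - seqT_certificate k m i"
proof -
  consider "k = 0" | "1 \<le> k" "i = 0" | "1 \<le> k" "i = 2 * k" | "1 \<le> i" "i < 2 * k"
    using assms by linarith
  then show ?thesis
  proof cases
    case 1
    with assms show ?thesis
      by (simp add: recurrence_defect_def seqT_summand_def seqT_certificate_def)
  next
    case 2
    then show ?thesis
      using recurrence_defect_boundary_summand[of k m] seqT_summand_boundary[of i k]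
      by (simp add: seqT_certificate_def)
  next
    case 3
    have "2 * (2 * k - 1) = 4 * k - 2" "m + 3 * k + 1 - (2 * k) = m + k + 1" "4 * k - 2 * (2 * k) = 0"
      "(-1::int) ^ (2 * k - 1) = -1"
      using 3 by (auto simp: power_diff)
    with 3 show ?thesis
      using recurrence_defect_boundary_summand[of k m] seqT_summand_boundary[of i k]
      by (simp add: seqT_certificate_def algebra_simps)
  next
    case 4
    then show ?thesis by (rule recurrence_defect_seqT_summand_interior)
  qed
qed

lemma seqT_recurrence:
  "int (m + 2) * seqT k (m + 2) = (6 * int k + 1) * seqT k (m + 1) + (int m + 1 + 2 * int k) * seqT k m"
proof -
  have "recurrence_defect k (seqT k) m
      = (\<Sum>i = 0..2 * k. seqT_certificate k m (Suc i) - seqT_certificate k m i)"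
    unfolding seqT_eq_sum_summand recurrence_defect_sum
    by (rule sum.cong) (simp_all add: recurrence_defect_seqT_summand)
  also have "\<dots> = seqT_certificate k m (Suc (2 * k)) - seqT_certificate k m 0"
    by (rule sum_Suc_diff) simp
  finally show ?thesis by (simp add: recurrence_defect_def seqT_certificate_def)
qed

lemma seqT_summand_eq_0:
  assumes "i + m < k \<or> k + m < i"
  shows "seqT_summand k m i = 0"
  using assms by (auto simp: seqT_summand_def binomial_eq_0)

lemma seqT_eq_sum_centered:
  assumes "m \<le> k"
  shows "seqT k m = (\<Sum>i = k - m..k + m. seqT_summand k m i)"
  unfolding seqT_eq_sum_summand
  using assms by (intro sum.mono_neutral_right) (auto intro: seqT_summand_eq_0)

lemma seqT_0: "seqT k 0 = (-1) ^ k"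
  by (simp add: seqT_eq_sum_centered seqT_summand_def mult_2[symmetric])

lemma seqT_1: "seqT k 1 = (-1) ^ k * (6 * int k + 1)"
proof (cases k)
  case 0
  then show ?thesis by (simp add: seqT_eq_sum_summand seqT_summand_def)
next
  case (Suc j)
  have seqT_k_1: "seqT k 1 = seqT_summand k 1 j + seqT_summand k 1 (j + 1) + seqT_summand k 1 (j + 2)"
    using Suc by (simp add: seqT_eq_sum_centered numeral_2_eq_2 add.commute)
  have choose_2: "(2 * j + 2) choose (2 * j) = (j + 1) * (2 * j + 1)"
  proof -
    have "(2 * j + 2) choose (2 * j) = (2 * j + 2) choose 2"
      using binomial_symmetric[of "2 * j" "2 * j + 2"] by simp
    also have "\<dots> = (j + 1) * (2 * j + 1)"
      by (simp add: choose_two)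
    finally show ?thesis .
  qed
  have choose_1: "(2 * j + 3) choose (2 * j + 2) = 2 * j + 3"
    using binomial_symmetric[of "2 * j + 2" "2 * j + 3"] by simp
  have idx: "1 + k + j = 2 * j + 2" "1 + 3 * k - j = 4 * k - 2 * j"
    "1 + k + (j + 1) = 2 * j + 3" "2 * (j + 1) = 2 * j + 2" "1 + 3 * k - (j + 1) = 2 * j + 3"
    "4 * k - (2 * j + 2) = 2 * j + 2" "1 + k + (j + 2) = 2 * (j + 2)" "1 + 3 * k - (j + 2) = 2 * j + 2"
    "4 * k - 2 * (j + 2) = 2 * j"
    using Suc by simp_all
  have "seqT_summand k 1 j = (-1) ^ j * int ((j + 1) * (2 * j + 1))"
    "seqT_summand k 1 (j + 1) = - ((-1) ^ j * int ((2 * j + 3) * (2 * j + 3)))"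
    "seqT_summand k 1 (j + 2) = (-1) ^ j * int ((j + 1) * (2 * j + 1))"
    unfolding seqT_summand_def idx choose_2 choose_1 by simp_all
  with Suc show ?thesis
    unfolding seqT_k_1 by (simp add: algebra_simps)
qed

theorem mainTheorem13:
  fixes k :: nat
  shows "seqS k 0 = (-1) ^ k
    \<and> seqS k 1 = (-1) ^ k * (6 * int k + 1)
    \<and> (\<forall>m::nat. int (m + 2) * seqS k (m + 2)
          = (6 * int k + 1) * seqS k (m + 1) + (int m + 1 + 2 * int k) * seqS k m)
    \<and> (\<forall>m::nat. int (m + 2) * seqT k (m + 2)
          = (6 * int k + 1) * seqT k (m + 1) + (int m + 1 + 2 * int k) * seqT k m)
    \<and> seqT k 0 = (-1) ^ k
    \<and> seqT k 1 = (-1) ^ k * (6 * int k + 1)"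
  using seqS_0 seqS_1 seqS_recurrence seqT_recurrence seqT_0 seqT_1 by blast

end
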